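(* Let $D$ be a digraph with at least one cycle, with girth $g$ and circumference $c$, such that $g-1\le c-g+2$ (i.e. $g\le \frac{c+3}{2}$). Then $\chi_A(D)\le c-g+2$.
   Context: Digraphs are finite and loopless; cycles are directed. The girth (resp. circumference) is the length of a shortest (resp. longest) directed cycle. $\chi_A(D)$ is the minimum number of colors in a vertex coloring of $D$ in which every color class induces an acyclic subdigraph. *)

theory Defs
  imports Main
begin

text \<open>A digraph is given by a finite vertex set V and an arc relation A \<subseteq> V \<times> V
  without loops (parallel arcs are irrelevant for all notions involved).\<close>

definition digraph :: "'a set \<Rightarrow> ('a \<times> 'a) set \<Rightarrow> bool" where
  "digraph V A \<longleftrightarrow> finite V \<and> A \<subseteq> V \<times> V \<and> (\<forall>v. (v, v) \<notin> A)"

definition is_cycle :: "('a \<times> 'a) set \<Rightarrow> 'a list \<Rightarrow> bool" where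
  "is_cycle A xs \<longleftrightarrow> xs \<noteq> [] \<and> distinct xs \<and>
     (\<forall>i < length xs. (xs ! i, xs ! ((i + 1) mod length xs)) \<in> A)"

definition cycle_lengths :: "('a \<times> 'a) set \<Rightarrow> nat set" where
  "cycle_lengths A = {length xs | xs. is_cycle A xs}"

definition girth :: "('a \<times> 'a) set \<Rightarrow> nat" where
  "girth A = Min (cycle_lengths A)"

definition circumference :: "('a \<times> 'a) set \<Rightarrow> nat" where
  "circumference A = Max (cycle_lengths A)"

definition acyclic_coloring :: "'a set \<Rightarrow> ('a \<times> 'a) set \<Rightarrow> ('a \<Rightarrow> nat) \<Rightarrow> nat \<Rightarrow> bool" where
  "acyclic_coloring V A f k \<longleftrightarrow> (\<forall>v\<in>V. f v < k) \<and>
     (\<forall>i. \<not> (\<exists>xs. is_cycle (A \<inter> ({v\<in>V. f v = i} \<times> {v\<in>V. f v = i})) xs))"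

definition dichromatic_number :: "'a set \<Rightarrow> ('a \<times> 'a) set \<Rightarrow> nat" where
  "dichromatic_number V A = (LEAST k. \<exists>f. acyclic_coloring V A f k)"

end

theory Submission
  imports Defs
begin

text \<open>Label the vertices by a depth-first search: d v is the depth of v on the search path
  and f orders the vertices by reverse finishing time. An arc (u, v) with f u \<le> f v must then
  be a back arc, leading from u to an ancestor v on the current path, and together with the
  path from v to u it closes a cycle of length d u - d v + 1. Every cycle of a colour class
  contains such an arc, namely the arc leaving its vertex of least f. Colouring v by the
  block d v div (g - 1) modulo c - g + 2 separates the ends of every back arc, since their
  depths differ by at least g - 1 and at most c - 1.\<close>

definition is_path :: "('a \<times> 'a) set \<Rightarrow> 'a list \<Rightarrow> bool" where
  "is_path A \<pi> \<longleftrightarrow> distinct \<pi> \<and> (\<forall>i. Suc i < length \<pi> \<longrightarrow> (\<pi> ! i, \<pi> ! Suc i) \<in> A)"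

definition dfs_labelling :: "'a set \<Rightarrow> ('a \<times> 'a) set \<Rightarrow> ('a \<Rightarrow> nat) \<Rightarrow> ('a \<Rightarrow> nat) \<Rightarrow> bool" where
  "dfs_labelling U A d f \<longleftrightarrow> (\<forall>u\<in>U. \<forall>v\<in>U. (u, v) \<in> A \<longrightarrow>
     f v < f u \<or> (d v < d u \<and> d u - d v + 1 \<in> cycle_lengths A))"

lemma is_path_snoc:
  assumes "is_path A \<pi>" "\<pi> \<noteq> []" "y \<notin> set \<pi>" "(last \<pi>, y) \<in> A"
  shows "is_path A (\<pi> @ [y])"
  unfolding is_path_def
proof (intro conjI allI impI)
  show "distinct (\<pi> @ [y])" using assms(1,3) by (simp add: is_path_def)
  fix i assume i: "Suc i < length (\<pi> @ [y])"
  show "((\<pi> @ [y]) ! i, (\<pi> @ [y]) ! Suc i) \<in> A"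
  proof (cases "Suc i < length \<pi>")
    case True
    then show ?thesis using assms(1) by (simp add: is_path_def nth_append)
  next
    case False
    with i have "i = length \<pi> - 1" by simp
    then show ?thesis using assms(2,4) False by (simp add: nth_append last_conv_nth)
  qed
qed

lemma is_path_butlast:
  assumes "is_path A (\<pi> @ [x])"
  shows "is_path A \<pi>"
  unfolding is_path_def
proof (intro conjI allI impI)
  show "distinct \<pi>" using assms by (simp add: is_path_def)
  fix i assume "Suc i < length \<pi>"
  with assms have "((\<pi> @ [x]) ! i, (\<pi> @ [x]) ! Suc i) \<in> A"
    unfolding is_path_def by (metis length_append_singleton less_SucI)
  with \<open>Suc i < length \<pi>\<close> show "(\<pi> ! i, \<pi> ! Suc i) \<in> A" by (simp add: nth_append)
qed

lemma is_cycle_drop_path: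
  assumes "is_path A \<pi>" "i < length \<pi>" "(last \<pi>, \<pi> ! i) \<in> A"
  shows "is_cycle A (drop i \<pi>)"
  unfolding is_cycle_def
proof (intro conjI allI impI)
  show "drop i \<pi> \<noteq> []" using assms(2) by simp
  show "distinct (drop i \<pi>)" using assms(1) by (simp add: is_path_def)
  fix j assume j: "j < length (drop i \<pi>)"
  show "(drop i \<pi> ! j, drop i \<pi> ! ((j + 1) mod length (drop i \<pi>))) \<in> A"
  proof (cases "j + 1 < length (drop i \<pi>)")
    case True
    then show ?thesis using assms(1) j by (simp add: is_path_def)
  next
    case False
    with j have "i + j = length \<pi> - 1" "j + 1 = length (drop i \<pi>)" by auto
    moreover have "\<pi> \<noteq> []" using assms(2) by auto
    ultimately have "drop i \<pi> ! j = last \<pi>" "(j + 1) mod length (drop i \<pi>) = 0"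
      by (simp_all add: last_conv_nth)
    then show ?thesis using assms(2,3) by simp
  qed
qed

lemma dfs_labelling_finish_vertex:
  assumes lab: "dfs_labelling (U - {x}) A d f"
    and path: "is_path A (\<pi> @ [x])"
    and depth: "map d \<pi> = [0..<length \<pi>]"
    and closed: "\<forall>v\<in>U. (x, v) \<in> A \<longrightarrow> v \<in> set \<pi>"
  shows "dfs_labelling U A (d(x := length \<pi>)) ((\<lambda>z. Suc (f z))(x := 0))"
  unfolding dfs_labelling_def
proof (intro ballI impI)
  let ?d = "d(x := length \<pi>)" and ?f = "(\<lambda>z. Suc (f z))(x := 0)"
  fix u v assume u: "u \<in> U" and v: "v \<in> U" and uv: "(u, v) \<in> A"
  have x_notin: "x \<notin> set \<pi>" using path by (simp add: is_path_def)
  show "?f v < ?f u \<or> (?d v < ?d u \<and> ?d u - ?d v + 1 \<in> cycle_lengths A)"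
  proof (cases "u = x")
    case True
    with closed v uv obtain i where i: "i < length \<pi>" "\<pi> ! i = v"
      by (auto simp: in_set_conv_nth)
    have "is_cycle A (drop i (\<pi> @ [x]))"
      using is_cycle_drop_path[OF path, of i] i uv True by (simp add: nth_append)
    moreover have "length (drop i (\<pi> @ [x])) = length \<pi> - i + 1" using i(1) by simp
    ultimately have "length \<pi> - i + 1 \<in> cycle_lengths A"
      unfolding cycle_lengths_def by (metis (mono_tags, lifting) mem_Collect_eq)
    moreover have "d v = i"
      using depth i by (metis add_0 nth_map nth_upt)
    moreover have "v \<noteq> x" using i x_notin by auto
    ultimately show ?thesis using True i(1) by simp
  next
    case u_ne_x: False
    show ?thesis
    proof (cases "v = x")
      case True
      then show ?thesis using u_ne_x by simp
    next
      case False
      then show ?thesis using lab u v uv u_ne_x unfolding dfs_labelling_def by simp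
    qed
  qed
qed

lemma length_le_card_if_is_path:
  assumes "is_path A \<pi>" "finite U" "set \<pi> \<subseteq> U"
  shows "length \<pi> \<le> card U"
proof -
  have "length \<pi> = card (set \<pi>)" using assms(1) by (simp add: is_path_def distinct_card)
  also have "\<dots> \<le> card U" using assms(2,3) by (rule card_mono)
  finally show ?thesis .
qed

text \<open>The search state is a path \<pi> from the root; the measure drops both when the path
  is extended and when its last vertex is finished and removed from U.\<close>

lemma dfs_labelling_extending_path:
  assumes "finite U" "\<forall>v. (v, v) \<notin> A" "is_path A \<pi>" "set \<pi> \<subseteq> U"
  shows "\<exists>d f. map d \<pi> = [0..<length \<pi>] \<and> dfs_labelling U A d f"
  using assms
proof (induction "2 * card U - length \<pi>" arbitrary: U \<pi> rule: less_induct)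
  case less
  note IH = less.hyps[OF _ _ less.prems(2)]
  have length_le: "length \<pi> \<le> card U"
    using length_le_card_if_is_path less.prems(1,3,4) by blast
  show ?case
  proof (cases "\<pi> = []")
    case True
    show ?thesis
    proof (cases "U = {}")
      case True
      then show ?thesis using \<open>\<pi> = []\<close> by (simp add: dfs_labelling_def)
    next
      case False
      then obtain r where r: "r \<in> U" by auto
      have "0 < card U" using False less.prems(1) by (simp add: card_gt_0_iff)
      then have "2 * card U - length [r] < 2 * card U - length \<pi>" using \<open>\<pi> = []\<close> by simp
      moreover have "is_path A [r]" by (simp add: is_path_def)
      ultimately obtain d f where "dfs_labelling U A d f"
        using IH[of U "[r]"] less.prems(1) r by auto
      then show ?thesis using \<open>\<pi> = []\<close> by auto
    qed
  next
    case nonempty: False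
    show ?thesis
    proof (cases "\<exists>y\<in>U. y \<notin> set \<pi> \<and> (last \<pi>, y) \<in> A")
      case True
      then obtain y where y: "y \<in> U" "y \<notin> set \<pi>" "(last \<pi>, y) \<in> A" by auto
      have path: "is_path A (\<pi> @ [y])"
        using less.prems(3) nonempty y(2,3) by (rule is_path_snoc)
      have set_y: "set (\<pi> @ [y]) \<subseteq> U" using less.prems(4) y(1) by simp
      have "length (\<pi> @ [y]) \<le> card U"
        using length_le_card_if_is_path[OF path less.prems(1) set_y] .
      then have "2 * card U - length (\<pi> @ [y]) < 2 * card U - length \<pi>" by simp
      then obtain d f where "map d (\<pi> @ [y]) = [0..<length (\<pi> @ [y])]" "dfs_labelling U A d f"
        using IH[of U "\<pi> @ [y]"] less.prems(1) path set_y by blast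
      then show ?thesis by auto
    next
      case False
      define x where "x = last \<pi>"
      define \<pi>' where "\<pi>' = butlast \<pi>"
      have \<pi>_eq: "\<pi> = \<pi>' @ [x]" using nonempty unfolding x_def \<pi>'_def by simp
      have x_notin: "x \<notin> set \<pi>'" using less.prems(3) \<pi>_eq by (simp add: is_path_def)
      have x_in: "x \<in> U" using less.prems(4) \<pi>_eq by auto
      have "card (U - {x}) = card U - 1" "0 < card U"
        using x_in less.prems(1) by (auto simp: card_gt_0_iff)
      then have "2 * card (U - {x}) - length \<pi>' < 2 * card U - length \<pi>"
        using length_le \<pi>_eq by simp
      moreover have "is_path A \<pi>'"
        using less.prems(3) \<pi>_eq by (auto intro: is_path_butlast)
      moreover have "set \<pi>' \<subseteq> U - {x}" using less.prems(4) \<pi>_eq x_notin by auto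
      moreover have "finite (U - {x})" using less.prems(1) by simp
      ultimately obtain d f where depth: "map d \<pi>' = [0..<length \<pi>']"
        and lab: "dfs_labelling (U - {x}) A d f"
        using IH[of "U - {x}" \<pi>'] by blast
      have "\<forall>v\<in>U. (x, v) \<in> A \<longrightarrow> v \<in> set \<pi>'"
      proof (intro ballI impI)
        fix v assume "v \<in> U" "(x, v) \<in> A"
        moreover from this have "v \<noteq> x" using less.prems(2) by auto
        moreover have "v \<in> set \<pi>"
          using False \<open>v \<in> U\<close> \<open>(x, v) \<in> A\<close> unfolding x_def by blast
        then have "v \<in> set (\<pi>' @ [x])" by (simp only: flip: \<pi>_eq)
        ultimately show "v \<in> set \<pi>'" by simp
      qed
      moreover have "is_path A (\<pi>' @ [x])" using less.prems(3) \<pi>_eq by simp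
      ultimately have "dfs_labelling U A (d(x := length \<pi>')) ((\<lambda>z. Suc (f z))(x := 0))"
        using dfs_labelling_finish_vertex[OF lab _ depth] by blast
      moreover have "map (d(x := length \<pi>')) \<pi> = [0..<length \<pi>]"
        using depth x_notin \<pi>_eq by simp
      ultimately show ?thesis by blast
    qed
  qed
qed

lemma exists_dfs_labelling:
  assumes "finite U" "\<forall>v. (v, v) \<notin> A"
  shows "\<exists>d f. dfs_labelling U A d f"
  using dfs_labelling_extending_path[OF assms, of "[]"] by (auto simp: is_path_def)

lemma monochromatic_cycle_has_back_arc:
  assumes lab: "dfs_labelling V A d f"
    and cyc: "is_cycle (A \<inter> ({v\<in>V. col v = i} \<times> {v\<in>V. col v = i})) xs"
  obtains u v where "col u = col v" "d v < d u" "d u - d v + 1 \<in> cycle_lengths A"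
proof -
  have "xs \<noteq> []" using cyc by (simp add: is_cycle_def)
  then have "Min (f ` set xs) \<in> f ` set xs" by simp
  then obtain j where j: "j < length xs" "f (xs ! j) = Min (f ` set xs)"
    by (auto simp: in_set_conv_nth)
  define v where "v = xs ! ((j + 1) mod length xs)"
  have arc: "(xs ! j, v) \<in> A \<inter> ({v\<in>V. col v = i} \<times> {v\<in>V. col v = i})"
    using cyc j(1) unfolding is_cycle_def v_def by blast
  have "f (xs ! j) \<le> f v"
    using j(2) \<open>xs \<noteq> []\<close> unfolding v_def by simp
  moreover have "xs ! j \<in> V" "v \<in> V" "(xs ! j, v) \<in> A" "col (xs ! j) = col v"
    using arc by auto
  ultimately have "d v < d (xs ! j) \<and> d (xs ! j) - d v + 1 \<in> cycle_lengths A"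
    using lab unfolding dfs_labelling_def by (meson leD)
  then show ?thesis using that \<open>col (xs ! j) = col v\<close> by blast
qed

lemma div_mod_ne_if_gap:
  fixes a b m k :: nat
  assumes "0 < m" "b + m \<le> a" "a - b + m \<le> k * m"
  shows "(a div m) mod k \<noteq> (b div m) mod k"
proof
  assume "(a div m) mod k = (b div m) mod k"
  moreover have "b div m < a div m"
    using div_le_mono[OF assms(2), of m] assms(1) by (simp add: div_add_self2)
  ultimately have "k dvd a div m - b div m" by (simp add: mod_eq_dvd_iff_nat)
  moreover have "a div m < b div m + k"
  proof -
    have "a div m * m \<le> a" by simp
    moreover have "b mod m < m" using assms(1) by simp
    then have "b < b div m * m + m" using div_mult_mod_eq[of b m] by linarith
    moreover have "a + m \<le> b + k * m" using assms(2,3) by linarith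
    ultimately have "a div m * m < (b div m + k) * m" unfolding distrib_right by linarith
    then show ?thesis by (rule mult_less_cancel2[THEN iffD1, THEN conjunct2])
  qed
  ultimately show False using \<open>b div m < a div m\<close> by (auto dest: dvd_imp_le)
qed

lemma cycle_lengths_bounded:
  assumes "digraph V A" "n \<in> cycle_lengths A"
  shows "2 \<le> n" "n \<le> card V"
proof -
  obtain xs where xs: "n = length xs" "is_cycle A xs"
    using assms(2) unfolding cycle_lengths_def by auto
  have "set xs \<subseteq> V"
  proof
    fix x assume "x \<in> set xs"
    then obtain j where "j < length xs" "xs ! j = x" by (auto simp: in_set_conv_nth)
    then have "(x, xs ! ((j + 1) mod length xs)) \<in> A" using xs(2) by (auto simp: is_cycle_def)
    then show "x \<in> V" using assms(1) by (auto simp: digraph_def)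
  qed
  then show "n \<le> card V"
    using xs assms(1) by (metis card_mono digraph_def distinct_card is_cycle_def)
  show "2 \<le> n"
  proof (rule ccontr)
    assume "\<not> 2 \<le> n"
    moreover have "0 < length xs" using xs(2) by (simp add: is_cycle_def)
    ultimately have "length xs = 1" using xs(1) by linarith
    then have "(xs ! 0, xs ! 0) \<in> A" using xs(2) unfolding is_cycle_def by fastforce
    then show False using assms(1) by (simp add: digraph_def)
  qed
qed

lemma girth_circumference_bounds:
  assumes "digraph V A" "n \<in> cycle_lengths A"
  shows "2 \<le> girth A" "girth A \<le> n" "n \<le> circumference A"
proof -
  have fin: "finite (cycle_lengths A)"
    using cycle_lengths_bounded(2)[OF assms(1)] by (meson finite_atMost finite_subset atMost_iff subsetI)
  then show "girth A \<le> n" "n \<le> circumference A"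
    using assms(2) unfolding girth_def circumference_def by auto
  have "Min (cycle_lengths A) \<in> cycle_lengths A" using fin assms(2) by (intro Min_in) auto
  then show "2 \<le> girth A" unfolding girth_def by (rule cycle_lengths_bounded(1)[OF assms(1)])
qed

lemma acyclic_coloring_depth_blocks:
  assumes lab: "dfs_labelling V A d f" and "0 < m" "0 < k"
    and lengths: "\<And>n. n \<in> cycle_lengths A \<Longrightarrow> m < n \<and> n - 1 + m \<le> k * m"
  shows "acyclic_coloring V A (\<lambda>v. (d v div m) mod k) k"
  unfolding acyclic_coloring_def
proof (intro conjI ballI allI notI)
  fix i assume "\<exists>xs. is_cycle (A \<inter> ({v\<in>V. (d v div m) mod k = i} \<times>
                                     {v\<in>V. (d v div m) mod k = i})) xs"
  then obtain xs where "is_cycle (A \<inter> ({v\<in>V. (d v div m) mod k = i} \<times>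
                                    {v\<in>V. (d v div m) mod k = i})) xs" ..
  then obtain u v where same_colour: "(d u div m) mod k = (d v div m) mod k"
    and "d v < d u" and cycle: "d u - d v + 1 \<in> cycle_lengths A"
    by (rule monochromatic_cycle_has_back_arc[OF lab])
  have "(d u div m) mod k \<noteq> (d v div m) mod k"
    using lengths[OF cycle] \<open>d v < d u\<close> \<open>0 < m\<close> by (intro div_mod_ne_if_gap) auto
  then show False using same_colour by simp
qed (simp add: \<open>0 < k\<close>)

theorem mainTheorem11:
  fixes V :: "'a set" and A :: "('a \<times> 'a) set"
  assumes "digraph V A"
    and "\<exists>xs. is_cycle A xs"
    and "girth A - 1 \<le> circumference A - girth A + 2"
  shows "dichromatic_number V A \<le> circumference A - girth A + 2"
proof -
  define g c where "g = girth A" and "c = circumference A"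
  obtain n where "n \<in> cycle_lengths A" using assms(2) unfolding cycle_lengths_def by auto
  from girth_circumference_bounds[OF assms(1) this] have "2 \<le> g" "g \<le> c"
    unfolding g_def c_def by linarith+
  then obtain h e where "g = h + 2" "c = h + 2 + e" by (metis add.commute le_Suc_ex)
  then have block_bound: "c - 1 + (g - 1) \<le> (c - g + 2) * (g - 1)"
    by (simp add: algebra_simps)
  have "finite V" "\<forall>v. (v, v) \<notin> A" using assms(1) by (simp_all add: digraph_def)
  then obtain d f where "dfs_labelling V A d f" using exists_dfs_labelling by blast
  moreover have "g - 1 < n \<and> n - 1 + (g - 1) \<le> (c - g + 2) * (g - 1)"
    if "n \<in> cycle_lengths A" for n
    using girth_circumference_bounds[OF assms(1) that] block_bound \<open>2 \<le> g\<close>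
    unfolding g_def c_def by linarith
  ultimately have "acyclic_coloring V A (\<lambda>v. (d v div (g - 1)) mod (c - g + 2)) (c - g + 2)"
    using \<open>2 \<le> g\<close> by (intro acyclic_coloring_depth_blocks) auto
  then have "\<exists>f. acyclic_coloring V A f (c - g + 2)" by blast
  then show ?thesis unfolding dichromatic_number_def g_def c_def by (rule Least_le)
qed

end
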